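(* Let $S=\{(6,5),(0,1),(1,1),(3,3)\}$ with $c_{(3,3)}=2$ and $c_{(6,5)}=c_{(0,1)}=c_{(1,1)}=1$. Then for every $n\ge0$, $$\Delta_n=\frac{N_{S,C}(n,n)-1}{2^{n+1}}.$$ In particular $\Delta_n>0$ for all $n\ge3$.
   Context: A fair coin is flipped $n$ times, producing a sequence $x_1,\dots,x_n\in\{H,T\}$ of independent uniformly random outcomes. Alice's score is the number of indices $i\in\{1,\dots,n-1\}$ with $(x_i,x_{i+1})=(H,H)$; Bob's score is the number of indices $i\in\{1,\dots,n-1\}$ with $(x_i,x_{i+1})=(H,T)$. $\Delta_n$ is the probability that Bob's score strictly exceeds Alice's minus the probability that Alice's score strictly exceeds Bob's. Given finite $S\subset\mathbb Z_{\ge0}^2\setminus\{(0,0)\}$ and positive integers $C=\{c_s\}_{s\in S}$, a colored lattice path is a finite (possibly empty) sequence $((s_1,x_1),\dots,(s_m,x_m))$ with $s_i\in S$ and $x_i\in\{1,\dots,c_{s_i}\}$; its endpoint is $\sum_i s_i$. $N_{S,C}(a,b)$ denotes the number of colored lattice paths with endpoint $(a,b)$. *)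

theory Defs
  imports Complex_Main
begin

text \<open>Coin sequences: a list of booleans, True = H, False = T.
  Index i (0-based) ranges over positions with i+1 < length xs.\<close>

definition alice_score :: "bool list \<Rightarrow> nat" where
  "alice_score xs = card {i. Suc i < length xs \<and> xs ! i \<and> xs ! Suc i}"

definition bob_score :: "bool list \<Rightarrow> nat" where
  "bob_score xs = card {i. Suc i < length xs \<and> xs ! i \<and> \<not> xs ! Suc i}"

definition Delta :: "nat \<Rightarrow> real" where
  "Delta n =
     (real (card {xs :: bool list. length xs = n \<and> bob_score xs > alice_score xs})
      - real (card {xs :: bool list. length xs = n \<and> alice_score xs > bob_score xs})) / 2 ^ n"

definition colored_paths :: "(nat \<times> nat) set \<Rightarrow> (nat \<times> nat \<Rightarrow> nat) \<Rightarrow> ((nat \<times> nat) \<times> nat) list set" where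
  "colored_paths S c = {p. \<forall>(s, x) \<in> set p. s \<in> S \<and> 1 \<le> x \<and> x \<le> c s}"

definition path_endpoint :: "((nat \<times> nat) \<times> nat) list \<Rightarrow> nat \<times> nat" where
  "path_endpoint p = (sum_list (map (fst \<circ> fst) p), sum_list (map (snd \<circ> fst) p))"

definition N_SC :: "(nat \<times> nat) set \<Rightarrow> (nat \<times> nat \<Rightarrow> nat) \<Rightarrow> nat \<Rightarrow> nat \<Rightarrow> nat" where
  "N_SC S c a b = card {p \<in> colored_paths S c. path_endpoint p = (a, b)}"

end

theory Submission
  imports Defs "HOL-Computational_Algebra.Formal_Power_Series"
begin

text \<open>
  Let d be Bob's score minus Alice's. Appending a coin changes d only after an H (by -1 for H,
  by +1 for T), so D(n) = #(Bob leads) - #(Alice leads) satisfies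
  D(n+1) = 2 D(n) - H(n,1) + H(n,-1), where H(n,k) counts sequences ending in H with d = k.
  The generating functions H_k(x) satisfy the kernel equation
  (1-x) H_k = x(1-x) H_(k+1) + x^2 H_(k-1) + [k=0] x, whose solution is unique. An explicit
  solution is built from the diagonal generating functions G_j(x) = sum_n N(n, n+j) x^n of the
  path counts: the path recurrence and the reflection G_(-1) = x^6 G_1 are exactly what make
  it a solution. Substituting it into the recurrence for D gives 2 D(x) = G_0(x) - 1/(1-x).
\<close>

unbundle fps_syntax

section \<open>Scores under appending a coin\<close>

lemma card_adjacent_pairs_snoc:
  "card {i. Suc i < length (xs @ [b]) \<and> P ((xs @ [b]) ! i) ((xs @ [b]) ! Suc i)}
   = card {i. Suc i < length xs \<and> P (xs ! i) (xs ! Suc i)} + (if xs \<noteq> [] \<and> P (last xs) b then 1 else 0)"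
proof -
  let ?old = "{i. Suc i < length xs \<and> P (xs ! i) (xs ! Suc i)}"
  let ?new = "if xs \<noteq> [] \<and> P (last xs) b then {length xs - 1} else {}"
  have "{i. Suc i < length (xs @ [b]) \<and> P ((xs @ [b]) ! i) ((xs @ [b]) ! Suc i)} = ?old \<union> ?new"
  proof (intro set_eqI iffI)
    fix i assume i: "i \<in> {i. Suc i < length (xs @ [b]) \<and> P ((xs @ [b]) ! i) ((xs @ [b]) ! Suc i)}"
    show "i \<in> ?old \<union> ?new"
    proof (cases "Suc i < length xs")
      case False
      with i have "Suc i = length xs" by simp
      then have "xs \<noteq> []" "xs ! i = last xs" by (metis diff_Suc_1 last_conv_nth list.size(3) nat.simps(3))+
      with i \<open>Suc i = length xs\<close> show ?thesis by (auto simp: nth_append)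
    qed (use i in \<open>auto simp: nth_append\<close>)
  qed (auto simp: nth_append last_conv_nth split: if_splits)
  moreover have "finite ?old" by (rule finite_subset[of _ "{..<length xs}"]) auto
  ultimately show ?thesis by (simp add: card_Un_disjoint)
qed

definition ends_in_H :: "bool list \<Rightarrow> bool" where
  "ends_in_H xs \<longleftrightarrow> xs \<noteq> [] \<and> last xs"

definition score_diff :: "bool list \<Rightarrow> int" where
  "score_diff xs = int (bob_score xs) - int (alice_score xs)"

lemma ends_in_H_Nil [simp]: "\<not> ends_in_H []"
  and ends_in_H_snoc [simp]: "ends_in_H (xs @ [b]) = b"
  by (simp_all add: ends_in_H_def)

lemma score_diff_Nil [simp]: "score_diff [] = 0"
  by (simp add: score_diff_def alice_score_def bob_score_def)

lemma score_diff_snoc: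
  "score_diff (xs @ [b]) = score_diff xs + (if ends_in_H xs then if b then -1 else 1 else 0)"
  using card_adjacent_pairs_snoc[where P="\<lambda>u v. u \<and> v"] card_adjacent_pairs_snoc[where P="\<lambda>u v. u \<and> \<not> v"]
  by (auto simp: score_diff_def alice_score_def bob_score_def ends_in_H_def)

lemma finite_lists_of_length: "finite {xs :: 'a :: finite list. length xs = n \<and> P xs}"
  by (rule finite_subset[OF _ finite_lists_length_eq[of UNIV n]]) auto

lemma card_bool_lists_Suc:
  "card {ys :: bool list. length ys = Suc n \<and> P ys}
   = card {xs. length xs = n \<and> P (xs @ [True])} + card {xs. length xs = n \<and> P (xs @ [False])}"
proof -
  let ?A = "\<lambda>b. (\<lambda>xs. xs @ [b]) ` {xs. length xs = n \<and> P (xs @ [b])}"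
  have "{ys :: bool list. length ys = Suc n \<and> P ys} = ?A True \<union> ?A False"
  proof (intro set_eqI iffI)
    fix ys assume "ys \<in> {ys :: bool list. length ys = Suc n \<and> P ys}"
    then obtain xs b where "ys = xs @ [b]" "length xs = n" "P ys"
      by (auto simp: length_Suc_conv_rev)
    then show "ys \<in> ?A True \<union> ?A False" by (cases b) auto
  qed auto
  moreover have "?A True \<inter> ?A False = {}" by auto
  moreover have "card (?A b) = card {xs. length xs = n \<and> P (xs @ [b])}" for b
    by (rule card_image) (simp add: inj_on_def)
  ultimately show ?thesis
    by (simp add: card_Un_disjoint finite_lists_of_length)
qed

definition count_seqs :: "nat \<Rightarrow> (int \<Rightarrow> bool \<Rightarrow> bool) \<Rightarrow> nat" where
  "count_seqs n F = card {xs. length xs = n \<and> F (score_diff xs) (ends_in_H xs)}"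

lemma count_seqs_0: "count_seqs 0 F = (if F 0 False then 1 else 0)"
proof -
  have "{xs. length xs = 0 \<and> F (score_diff xs) (ends_in_H xs)} = (if F 0 False then {[]} else {})"
    by auto
  then show ?thesis by (simp add: count_seqs_def)
qed

lemma count_seqs_False [simp]: "count_seqs n (\<lambda>d h. False) = 0"
  by (simp add: count_seqs_def)

lemma count_seqs_Suc:
  "count_seqs (Suc n) F = count_seqs n (\<lambda>d h. F (d - of_bool h) True)
                        + count_seqs n (\<lambda>d h. F (d + of_bool h) False)"
  by (simp add: count_seqs_def card_bool_lists_Suc score_diff_snoc)

lemma count_seqs_cong: "(\<And>d h. F d h = G d h) \<Longrightarrow> count_seqs n F = count_seqs n G"
  by (simp add: count_seqs_def)

lemma count_seqs_disj:
  "(\<And>d h. \<not> (F d h \<and> G d h)) \<Longrightarrow> count_seqs n (\<lambda>d h. F d h \<or> G d h) = count_seqs n F + count_seqs n G"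
  unfolding count_seqs_def
  by (subst card_Un_disjoint[symmetric]) (auto intro!: finite_lists_of_length arg_cong[where f = card])

definition count_H :: "nat \<Rightarrow> int \<Rightarrow> nat" where
  "count_H n k = count_seqs n (\<lambda>d h. h \<and> d = k)"

definition count_T :: "nat \<Rightarrow> int \<Rightarrow> nat" where
  "count_T n k = count_seqs n (\<lambda>d h. \<not> h \<and> d = k)"

lemma count_H_0: "count_H 0 k = 0"
  and count_T_0: "count_T 0 k = of_bool (k = 0)"
  by (simp_all add: count_H_def count_T_def count_seqs_0)

lemma count_H_Suc: "count_H (Suc n) k = count_H n (k + 1) + count_T n k"
proof -
  have "count_H (Suc n) k = count_seqs n (\<lambda>d h. (h \<and> d = k + 1) \<or> (\<not> h \<and> d = k))"
    unfolding count_H_def count_seqs_Suc by (auto intro: count_seqs_cong)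
  also have "\<dots> = count_H n (k + 1) + count_T n k"
    unfolding count_H_def count_T_def by (rule count_seqs_disj) auto
  finally show ?thesis .
qed

lemma count_T_Suc: "count_T (Suc n) k = count_H n (k - 1) + count_T n k"
proof -
  have "count_T (Suc n) k = count_seqs n (\<lambda>d h. (h \<and> d = k - 1) \<or> (\<not> h \<and> d = k))"
    unfolding count_T_def count_seqs_Suc by (auto intro: count_seqs_cong)
  also have "\<dots> = count_H n (k - 1) + count_T n k"
    unfolding count_H_def count_T_def by (rule count_seqs_disj) auto
  finally show ?thesis .
qed

definition bob_leads :: "nat \<Rightarrow> nat" where
  "bob_leads n = count_seqs n (\<lambda>d h. d > 0)"

definition alice_leads :: "nat \<Rightarrow> nat" where
  "alice_leads n = count_seqs n (\<lambda>d h. d < 0)"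

lemma bob_leads_0: "bob_leads 0 = 0" and alice_leads_0: "alice_leads 0 = 0"
  by (simp_all add: bob_leads_def alice_leads_def count_seqs_0)

lemma bob_leads_Suc: "bob_leads (Suc n) + count_H n 1 = 2 * bob_leads n + count_H n 0"
proof -
  have "count_seqs n (\<lambda>d h. d - of_bool h > 0) + count_H n 1 = bob_leads n"
    unfolding bob_leads_def count_H_def
    by (subst count_seqs_disj[symmetric]) (auto intro: count_seqs_cong)
  moreover have "count_seqs n (\<lambda>d h. d + of_bool h > 0) = bob_leads n + count_H n 0"
    unfolding bob_leads_def count_H_def
    by (subst count_seqs_disj[symmetric]) (auto intro: count_seqs_cong)
  ultimately show ?thesis
    by (simp add: bob_leads_def[of "Suc n"] count_seqs_Suc)
qed

lemma alice_leads_Suc: "alice_leads (Suc n) + count_H n (-1) = 2 * alice_leads n + count_H n 0"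
proof -
  have "count_seqs n (\<lambda>d h. d + of_bool h < 0) + count_H n (-1) = alice_leads n"
    unfolding alice_leads_def count_H_def
    by (subst count_seqs_disj[symmetric]) (auto intro: count_seqs_cong)
  moreover have "count_seqs n (\<lambda>d h. d - of_bool h < 0) = alice_leads n + count_H n 0"
    unfolding alice_leads_def count_H_def
    by (subst count_seqs_disj[symmetric]) (auto intro: count_seqs_cong)
  ultimately show ?thesis
    by (simp add: alice_leads_def[of "Suc n"] count_seqs_Suc)
qed

lemma Delta_eq_leads: "Delta n = (real (bob_leads n) - real (alice_leads n)) / 2 ^ n"
  by (simp add: Delta_def bob_leads_def alice_leads_def count_seqs_def score_diff_def)

section \<open>Counting coloured lattice paths\<close>

abbreviation paths_to :: "(nat \<times> nat) set \<Rightarrow> (nat \<times> nat \<Rightarrow> nat) \<Rightarrow> nat \<Rightarrow> nat \<Rightarrow> ((nat \<times> nat) \<times> nat) list set" where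
  "paths_to S c a b \<equiv> {p \<in> colored_paths S c. path_endpoint p = (a, b)}"

lemma path_endpoint_Nil [simp]: "path_endpoint [] = (0, 0)"
  and path_endpoint_Cons [simp]:
    "path_endpoint ((s, x) # p) = (fst s + fst (path_endpoint p), snd s + snd (path_endpoint p))"
  by (simp_all add: path_endpoint_def)

lemma Nil_in_colored_paths [simp]: "[] \<in> colored_paths S c"
  and Cons_in_colored_paths [simp]:
    "(s, x) # p \<in> colored_paths S c \<longleftrightarrow> s \<in> S \<and> x \<in> {1..c s} \<and> p \<in> colored_paths S c"
  by (auto simp: colored_paths_def)

lemma paths_to_eq:
  "paths_to S c a b = (if (a, b) = (0, 0) then {[]} else {}) \<union>
     (\<Union>(s, x) \<in> Sigma {s \<in> S. fst s \<le> a \<and> snd s \<le> b} (\<lambda>s. {1..c s}).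
        Cons (s, x) ` paths_to S c (a - fst s) (b - snd s))"
proof (intro set_eqI iffI)
  fix p assume p: "p \<in> paths_to S c a b"
  show "p \<in> (if (a, b) = (0, 0) then {[]} else {}) \<union>
     (\<Union>(s, x) \<in> Sigma {s \<in> S. fst s \<le> a \<and> snd s \<le> b} (\<lambda>s. {1..c s}).
        Cons (s, x) ` paths_to S c (a - fst s) (b - snd s))"
  proof (cases p)
    case (Cons e q)
    obtain s x where e: "e = (s, x)" by (rule prod.exhaust)
    with p Cons have "(s, x) \<in> Sigma {s \<in> S. fst s \<le> a \<and> snd s \<le> b} (\<lambda>s. {1..c s})"
      and "p \<in> Cons (s, x) ` paths_to S c (a - fst s) (b - snd s)"
      by (auto simp: prod_eq_iff)
    then show ?thesis by blast
  qed (use p in auto)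
qed (auto split: if_splits)

lemma finite_paths_to:
  assumes "finite S" "(0, 0) \<notin> S"
  shows "finite (paths_to S c a b)"
proof (induction "a + b" arbitrary: a b rule: less_induct)
  case less
  have "finite (paths_to S c (a - fst s) (b - snd s))"
    if "s \<in> S" "fst s \<le> a" "snd s \<le> b" for s
  proof (rule less)
    have "fst s + snd s > 0"
      using that(1) assms(2) by (cases s) (auto intro: gr0I)
    with that show "a - fst s + (b - snd s) < a + b" by linarith
  qed
  then show ?case
    using assms(1) by (subst paths_to_eq) auto
qed

lemma N_SC_rec:
  assumes "finite S" "(0, 0) \<notin> S"
  shows "N_SC S c a b = of_bool ((a, b) = (0, 0))
           + (\<Sum>s\<in>S. if fst s \<le> a \<and> snd s \<le> b then c s * N_SC S c (a - fst s) (b - snd s) else 0)"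
proof -
  let ?S = "{s \<in> S. fst s \<le> a \<and> snd s \<le> b}"
  let ?U = "\<Union>(s, x) \<in> Sigma ?S (\<lambda>s. {1..c s}). Cons (s, x) ` paths_to S c (a - fst s) (b - snd s)"
  have fin: "finite (paths_to S c a' b')" for a' b'
    using assms by (rule finite_paths_to)
  have "card ?U = (\<Sum>(s, x) \<in> Sigma ?S (\<lambda>s. {1..c s}). card (Cons (s, x) ` paths_to S c (a - fst s) (b - snd s)))"
    using assms(1) fin by (subst card_UN_disjoint) (auto simp: prod.case_distrib)
  also have "\<dots> = (\<Sum>s\<in>?S. c s * N_SC S c (a - fst s) (b - snd s))"
    using assms(1) by (simp add: sum.Sigma[symmetric] card_image N_SC_def)
  also have "\<dots> = (\<Sum>s\<in>S. if fst s \<le> a \<and> snd s \<le> b then c s * N_SC S c (a - fst s) (b - snd s) else 0)"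
    using assms(1) by (simp add: sum.inter_filter)
  finally have "card ?U = \<dots>" .
  moreover have "card (paths_to S c a b) = of_bool ((a, b) = (0, 0)) + card ?U"
    using fin[of a b] by (subst paths_to_eq, subst card_Un_disjoint) (auto simp: paths_to_eq[of S c a b])
  ultimately show ?thesis by (simp add: N_SC_def)
qed

definition steps :: "(nat \<times> nat) set" where
  "steps = {(6, 5), (0, 1), (1, 1), (3, 3)}"

definition colours :: "nat \<times> nat \<Rightarrow> nat" where
  "colours = (\<lambda>s. if s = (3, 3) then 2 else 1)"

definition npaths :: "int \<Rightarrow> int \<Rightarrow> real" where
  "npaths a b = (if a < 0 \<or> b < 0 then 0 else real (N_SC steps colours (nat a) (nat b)))"

lemma npaths_neg: "a < 0 \<or> b < 0 \<Longrightarrow> npaths a b = 0"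
  and npaths_nonneg: "npaths a b \<ge> 0"
  by (simp_all add: npaths_def)

lemma npaths_diff:
  "npaths (int n - int k) (int m - int l) = (if k \<le> n \<and> l \<le> m then real (N_SC steps colours (n - k) (m - l)) else 0)"
  by (auto simp: npaths_def nat_diff_distrib)

lemma npaths_rec:
  "npaths a b = of_bool (a = 0 \<and> b = 0) + npaths (a - 6) (b - 5) + npaths a (b - 1)
                + npaths (a - 1) (b - 1) + 2 * npaths (a - 3) (b - 3)"
proof (cases "a < 0 \<or> b < 0")
  case False
  then obtain n m where ab: "a = int n" "b = int m"
    by (metis nonneg_int_cases not_less)
  have "N_SC steps colours n m = of_bool (n = 0 \<and> m = 0)
      + (if 6 \<le> n \<and> 5 \<le> m then N_SC steps colours (n - 6) (m - 5) else 0)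
      + (if 1 \<le> m then N_SC steps colours n (m - 1) else 0)
      + (if 1 \<le> n \<and> 1 \<le> m then N_SC steps colours (n - 1) (m - 1) else 0)
      + (if 3 \<le> n \<and> 3 \<le> m then 2 * N_SC steps colours (n - 3) (m - 3) else 0)"
    by (subst N_SC_rec) (simp_all add: steps_def colours_def)
  then show ?thesis
    using npaths_diff[of n 6 m 5] npaths_diff[of n 0 m 1] npaths_diff[of n 1 m 1] npaths_diff[of n 3 m 3]
    by (simp add: ab npaths_def)
qed (auto simp: npaths_neg)

text \<open>Only the case e = 1 is needed later, but the induction has to pass through all e.\<close>

lemma npaths_reflect:
  assumes "a - b = e" "e \<ge> 0"
  shows "npaths a b = npaths (a - 6 * e) (b - 4 * e)"
  using assms
proof (induction "nat (a + b + 12)" arbitrary: a b e rule: less_induct)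
  case less
  show ?case
  proof (cases "a < 0 \<or> b < 0 \<or> e = 0")
    case True
    with less.prems show ?thesis by (auto simp: npaths_neg)
  next
    case False
    with less.prems have "e \<ge> 1" by simp
    have "npaths (a - 6) (b - 5) = npaths (a - 6 * e) (b - 4 * e - 1)"
      using less.hyps[of "a - 6" "b - 5" "e - 1"] less.prems False \<open>e \<ge> 1\<close> by (simp add: algebra_simps)
    moreover have "npaths a (b - 1) = npaths (a - 6 * e - 6) (b - 4 * e - 5)"
      using less.hyps[of a "b - 1" "e + 1"] less.prems False by (simp add: algebra_simps)
    moreover have "npaths (a - k) (b - k) = npaths (a - 6 * e - k) (b - 4 * e - k)" if "k \<in> {1, 3}" for k
      using less.hyps[of "a - k" "b - k" e] less.prems False that by (auto simp: algebra_simps)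
    moreover have "\<not> (a = 0 \<and> b = 0)" "\<not> (a - 6 * e = 0 \<and> b - 4 * e = 0)"
      using less.prems False by auto
    ultimately show ?thesis
      using npaths_rec[of a b] npaths_rec[of "a - 6 * e" "b - 4 * e"] False
      by (simp add: algebra_simps)
  qed
qed

definition diag_gf :: "int \<Rightarrow> real fps" where
  "diag_gf j = Abs_fps (\<lambda>n. npaths (int n) (int n + j))"

lemma diag_gf_shift_nth: "(fps_X ^ k * diag_gf j) $ n = npaths (int n - int k) (int n - int k + j)"
  by (auto simp: fps_X_power_mult_nth diag_gf_def of_nat_diff npaths_def)

lemma diag_gf_rec:
  "diag_gf j = of_bool (j = 0) + fps_X * diag_gf j + 2 * fps_X ^ 3 * diag_gf j
               + fps_X ^ 6 * diag_gf (j + 1) + diag_gf (j - 1)"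
proof (rule fps_ext)
  fix n
  show "diag_gf j $ n = (of_bool (j = 0) + fps_X * diag_gf j + 2 * fps_X ^ 3 * diag_gf j
               + fps_X ^ 6 * diag_gf (j + 1) + diag_gf (j - 1)) $ n"
  proof -
    have "(of_bool (j = 0) :: real fps) $ n = of_bool (int n = 0 \<and> int n + j = 0)"
      by auto
    then show ?thesis
      using npaths_rec[of "int n" "int n + j"] diag_gf_shift_nth[of 1 j n]
        diag_gf_shift_nth[of 3 j n] diag_gf_shift_nth[of 6 "j + 1" n]
      by (simp add: diag_gf_def numeral_fps_const mult.assoc algebra_simps del: of_bool_eq)
  qed
qed

lemma diag_gf_minus_one: "diag_gf (-1) = fps_X ^ 6 * diag_gf 1"
proof (rule fps_ext)
  fix n
  show "diag_gf (-1) $ n = (fps_X ^ 6 * diag_gf 1) $ n"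
    using npaths_reflect[of "int n" "int n - 1" 1] diag_gf_shift_nth[of 6 1 n]
    by (simp add: diag_gf_def algebra_simps)
qed

lemma diag_gf_zero_eq: "(1 - fps_X - 2 * fps_X ^ 3) * diag_gf 0 - 2 * fps_X ^ 6 * diag_gf 1 = 1"
  using diag_gf_rec[of 0] by (simp add: diag_gf_minus_one algebra_simps)

lemma npaths_diag_ge_1: "npaths (int n) (int n) \<ge> 1"
proof (induction n)
  case 0
  then show ?case
    using npaths_rec[of 0 0] by (simp add: npaths_neg)
next
  case (Suc n)
  have "npaths (int (Suc n)) (int (Suc n)) \<ge> npaths (int n) (int n)"
    using npaths_rec[of "int (Suc n)" "int (Suc n)"] npaths_nonneg[of "int (Suc n) - 6" "int (Suc n) - 5"]
      npaths_nonneg[of "int (Suc n)" "int (Suc n) - 1"] npaths_nonneg[of "int (Suc n) - 3" "int (Suc n) - 3"]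
    by simp
  with Suc show ?case by simp
qed

lemma npaths_diag_ge_2: "n \<ge> 3 \<Longrightarrow> npaths (int n) (int n) \<ge> 2"
  using npaths_rec[of "int n" "int n"] npaths_diag_ge_1[of "n - 3"]
    npaths_nonneg[of "int n - 6" "int n - 5"] npaths_nonneg[of "int n" "int n - 1"]
    npaths_nonneg[of "int n - 1" "int n - 1"]
  by (simp add: of_nat_diff)

section \<open>The kernel equation\<close>

lemma kernel_solution_unique:
  fixes D :: "int \<Rightarrow> 'a :: comm_ring_1 fps"
  assumes zero: "\<And>k. D k $ 0 = 0"
    and rec: "\<And>k. (1 - fps_X) * D k = fps_X * (1 - fps_X) * D (k + 1) + fps_X ^ 2 * D (k - 1)"
  shows "D k = 0"
proof -
  have step: "D k = fps_X * (D k + D (k + 1) - fps_X * D (k + 1) + fps_X * D (k - 1))" for k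
    using rec[of k] by (simp add: algebra_simps power2_eq_square)
  have "D k $ n = 0" for k n
  proof (induction n arbitrary: k rule: less_induct)
    case (less n)
    show ?case
    proof (cases n)
      case (Suc m)
      with less show ?thesis by (subst step) (simp add: fps_X_mult_nth)
    qed (simp add: zero)
  qed
  then show ?thesis by (intro fps_ext) simp
qed

definition fps_H :: "int \<Rightarrow> real fps" where
  "fps_H k = Abs_fps (\<lambda>n. real (count_H n k))"

definition fps_T :: "int \<Rightarrow> real fps" where
  "fps_T k = Abs_fps (\<lambda>n. real (count_T n k))"

lemma fps_H_rec: "fps_H k = fps_X * (fps_H (k + 1) + fps_T k)"
  by (rule fps_ext) (auto simp: fps_H_def fps_T_def count_H_0 count_H_Suc gr0_conv_Suc)

lemma fps_T_rec: "fps_T k = fps_X * (fps_H (k - 1) + fps_T k) + of_bool (k = 0)"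
  by (rule fps_ext) (auto simp: fps_H_def fps_T_def count_T_0 count_T_Suc gr0_conv_Suc)

lemma fps_H_kernel:
  "(1 - fps_X) * fps_H k = fps_X * (1 - fps_X) * fps_H (k + 1) + fps_X ^ 2 * fps_H (k - 1) + of_bool (k = 0) * fps_X"
proof -
  have T: "(1 - fps_X) * fps_T k = fps_X * fps_H (k - 1) + of_bool (k = 0)"
    using fps_T_rec[of k] by (simp add: algebra_simps)
  have "(1 - fps_X) * fps_H k = fps_X * (1 - fps_X) * fps_H (k + 1) + fps_X * ((1 - fps_X) * fps_T k)"
    by (subst fps_H_rec) (simp add: algebra_simps)
  also have "\<dots> = fps_X * (1 - fps_X) * fps_H (k + 1) + fps_X ^ 2 * fps_H (k - 1) + of_bool (k = 0) * fps_X"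
    unfolding T by (simp add: algebra_simps power2_eq_square)
  finally show ?thesis .
qed

text \<open>
  comb_gf s j is (x + x^4 E)^j applied to G at index s, with E the shift G_i \<mapsto> G_(i+1);
  by diag_gf_rec this is a solution of the kernel equation in j.
\<close>

fun comb_gf :: "nat \<Rightarrow> nat \<Rightarrow> real fps" where
  "comb_gf s 0 = diag_gf (int s)"
| "comb_gf s (Suc j) = fps_X * comb_gf s j + fps_X ^ 4 * comb_gf (Suc s) j"

definition kernel_defect :: "(nat \<Rightarrow> real fps) \<Rightarrow> nat \<Rightarrow> real fps" where
  "kernel_defect W j = (1 - fps_X) * W (Suc j) - fps_X * (1 - fps_X) * W j - fps_X ^ 2 * W (Suc (Suc j))"

lemma kernel_defect_comb_gf: "kernel_defect (comb_gf s) j = 0"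
proof (induction j arbitrary: s)
  case 0
  have "kernel_defect (comb_gf s) 0 = fps_X ^ 4 * (diag_gf (int s + 1)
          - (fps_X * diag_gf (int s + 1) + 2 * fps_X ^ 3 * diag_gf (int s + 1)
             + fps_X ^ 6 * diag_gf (int s + 1 + 1) + diag_gf (int s + 1 - 1)))"
    by (simp add: kernel_defect_def algebra_simps numeral_eq_Suc)
  also have "\<dots> = 0"
    using diag_gf_rec[of "int s + 1"] by simp
  finally show ?case .
next
  case (Suc j)
  have "kernel_defect (comb_gf s) (Suc j)
          = fps_X * kernel_defect (comb_gf s) j + fps_X ^ 4 * kernel_defect (comb_gf (Suc s)) j"
    unfolding kernel_defect_def comb_gf.simps(2)[of s "Suc (Suc j)"]
      comb_gf.simps(2)[of s "Suc j"] comb_gf.simps(2)[of s j]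
    by (simp add: algebra_simps)
  with Suc show ?case by simp
qed

definition ratio_fps :: "real fps" where
  "ratio_fps = fps_X * inverse (1 - fps_X)"

lemma one_minus_X_mult_ratio_fps: "(1 - fps_X) * ratio_fps = fps_X"
  by (simp add: ratio_fps_def mult.left_commute[of "1 - fps_X"] inverse_mult_eq_1')

lemma one_minus_X_nonzero: "(1 - fps_X :: real fps) \<noteq> 0"
  by (metis fps_X_nth fps_one_nth fps_sub_nth one_neq_zero right_minus_eq zero_neq_one)

lemma kernel_defect_reverse:
  "(1 - fps_X) * ((1 - fps_X) * (ratio_fps ^ Suc j * W (Suc j))
      - fps_X * (1 - fps_X) * (ratio_fps ^ Suc (Suc j) * W (Suc (Suc j)))
      - fps_X ^ 2 * (ratio_fps ^ j * W j))
   = fps_X * ratio_fps ^ j * kernel_defect W j"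
proof -
  let ?r = ratio_fps
  have "(1 - fps_X) * ((1 - fps_X) * (?r ^ Suc j * W (Suc j))
      - fps_X * (1 - fps_X) * (?r ^ Suc (Suc j) * W (Suc (Suc j)))
      - fps_X ^ 2 * (?r ^ j * W j))
    = ?r ^ j * (((1 - fps_X) * ?r) * ((1 - fps_X) * W (Suc j))
      - fps_X * ((1 - fps_X) * ?r) * ((1 - fps_X) * ?r) * W (Suc (Suc j))
      - fps_X ^ 2 * (1 - fps_X) * W j)"
    by (simp add: algebra_simps)
  also have "\<dots> = fps_X * ?r ^ j * kernel_defect W j"
    unfolding one_minus_X_mult_ratio_fps kernel_defect_def by (simp add: algebra_simps power2_eq_square)
  finally show ?thesis .
qed

text \<open>
  The solution comb_gf 0 is read backwards for k \<le> 0 and twisted by ratio_fps^k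
  (kernel_defect_reverse) for k > 0; the two halves fit together at k = 0 by diag_gf_zero_eq.
\<close>

definition H_closed :: "int \<Rightarrow> real fps" where
  "H_closed k = (if k \<le> 0 then fps_X * comb_gf 0 (nat (- k))
                 else fps_X * ratio_fps ^ nat k * comb_gf 0 (nat k))"

lemma H_closed_kernel:
  "(1 - fps_X) * H_closed k
     = fps_X * (1 - fps_X) * H_closed (k + 1) + fps_X ^ 2 * H_closed (k - 1) + of_bool (k = 0) * fps_X"
proof -
  consider "k < 0" | "k = 0" | "k > 0" by linarith
  then show ?thesis
  proof cases
    case 1
    define j where "j = nat (- k - 1)"
    have k: "k = - int j - 1" using 1 by (simp add: j_def)
    have "(1 - fps_X) * H_closed k - fps_X * (1 - fps_X) * H_closed (k + 1) - fps_X ^ 2 * H_closed (k - 1)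
        = fps_X * kernel_defect (comb_gf 0) j"
      by (simp add: H_closed_def k kernel_defect_def nat_add_distrib algebra_simps del: comb_gf.simps)
    with 1 show ?thesis by (simp add: kernel_defect_comb_gf algebra_simps)
  next
    case 2
    let ?W1 = "comb_gf 0 1"
    have H: "H_closed 0 = fps_X * diag_gf 0" "H_closed 1 = fps_X * ratio_fps * ?W1" "H_closed (- 1) = fps_X * ?W1"
      by (simp_all add: H_closed_def)
    have "fps_X * (1 - fps_X) * H_closed 1 = fps_X ^ 2 * ((1 - fps_X) * ratio_fps) * ?W1"
      unfolding H by (simp add: algebra_simps power2_eq_square)
    also have "\<dots> = fps_X ^ 3 * ?W1"
      unfolding one_minus_X_mult_ratio_fps by (simp add: algebra_simps numeral_eq_Suc)
    finally have "(1 - fps_X) * H_closed 0 - fps_X * (1 - fps_X) * H_closed 1 - fps_X ^ 2 * H_closed (- 1) - fps_X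
        = fps_X * ((1 - fps_X) * diag_gf 0 - 2 * fps_X ^ 2 * ?W1 - 1)"
      unfolding H by (simp add: algebra_simps numeral_eq_Suc del: comb_gf.simps)
    also have "\<dots> = fps_X * ((1 - fps_X - 2 * fps_X ^ 3) * diag_gf 0 - 2 * fps_X ^ 6 * diag_gf 1 - 1)"
      by (simp add: algebra_simps numeral_eq_Suc)
    also have "\<dots> = 0"
      by (simp add: diag_gf_zero_eq)
    finally show ?thesis using 2 by (simp add: algebra_simps)
  next
    case 3
    define j where "j = nat (k - 1)"
    let ?r = ratio_fps and ?W = "comb_gf 0"
    have k: "k = int j + 1" using 3 by (simp add: j_def)
    have H: "H_closed k = fps_X * (?r ^ Suc j * ?W (Suc j))"
      "H_closed (k + 1) = fps_X * (?r ^ Suc (Suc j) * ?W (Suc (Suc j)))"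
      "H_closed (k - 1) = fps_X * (?r ^ j * ?W j)"
      by (auto simp: H_closed_def k nat_add_distrib)
    have "(1 - fps_X) * ((1 - fps_X) * H_closed k - fps_X * (1 - fps_X) * H_closed (k + 1) - fps_X ^ 2 * H_closed (k - 1))
        = fps_X * ((1 - fps_X) * ((1 - fps_X) * (?r ^ Suc j * ?W (Suc j))
            - fps_X * (1 - fps_X) * (?r ^ Suc (Suc j) * ?W (Suc (Suc j)))
            - fps_X ^ 2 * (?r ^ j * ?W j)))"
      unfolding H by (simp add: algebra_simps del: comb_gf.simps power_Suc)
    also have "\<dots> = 0"
      by (simp add: kernel_defect_reverse kernel_defect_comb_gf del: comb_gf.simps power_Suc)
    finally have "(1 - fps_X) * H_closed k - fps_X * (1 - fps_X) * H_closed (k + 1) - fps_X ^ 2 * H_closed (k - 1) = 0"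
      using one_minus_X_nonzero by simp
    with 3 show ?thesis by (simp add: diff_eq_eq)
  qed
qed

lemma fps_H_eq_H_closed: "fps_H k = H_closed k"
proof -
  have "fps_H k - H_closed k = 0"
  proof (rule kernel_solution_unique)
    show "(fps_H k - H_closed k) $ 0 = 0" for k
      by (simp add: fps_H_def count_H_0 H_closed_def)
    fix k
    have "(1 - fps_X) * (fps_H k - H_closed k) = (1 - fps_X) * fps_H k - (1 - fps_X) * H_closed k"
      by (simp add: right_diff_distrib)
    also have "\<dots> = fps_X * (1 - fps_X) * (fps_H (k + 1) - H_closed (k + 1)) + fps_X ^ 2 * (fps_H (k - 1) - H_closed (k - 1))"
      unfolding fps_H_kernel[of k] H_closed_kernel[of k] by (simp add: algebra_simps)
    finally show "(1 - fps_X) * (fps_H k - H_closed k)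
        = fps_X * (1 - fps_X) * (fps_H (k + 1) - H_closed (k + 1)) + fps_X ^ 2 * (fps_H (k - 1) - H_closed (k - 1))" .
  qed
  then show ?thesis by simp
qed

definition fps_D :: "real fps" where
  "fps_D = Abs_fps (\<lambda>n. real (bob_leads n) - real (alice_leads n))"

lemma fps_D_rec: "fps_D = fps_X * (2 * fps_D - fps_H 1 + fps_H (- 1))"
proof (rule fps_ext)
  fix n
  show "fps_D $ n = (fps_X * (2 * fps_D - fps_H 1 + fps_H (- 1))) $ n"
  proof (cases n)
    case (Suc m)
    have "real (bob_leads (Suc m)) + real (count_H m 1) = 2 * real (bob_leads m) + real (count_H m 0)"
      "real (alice_leads (Suc m)) + real (count_H m (-1)) = 2 * real (alice_leads m) + real (count_H m 0)"
      using bob_leads_Suc[of m] alice_leads_Suc[of m] by (simp_all flip: of_nat_add of_nat_mult)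
    then show ?thesis
      by (simp add: Suc fps_D_def fps_H_def numeral_fps_const)
  qed (simp add: fps_D_def bob_leads_0 alice_leads_0)
qed

lemma one_minus_X_mult_fps_D: "(1 - fps_X) * fps_D = fps_X ^ 2 * comb_gf 0 1"
proof -
  let ?W1 = "comb_gf 0 1"
  have H: "fps_H 1 = fps_X * ratio_fps * ?W1" "fps_H (- 1) = fps_X * ?W1"
    by (simp_all add: fps_H_eq_H_closed H_closed_def)
  have "(1 - 2 * fps_X) * ((1 - fps_X) * fps_D - fps_X ^ 2 * ?W1)
      = (1 - fps_X) * (fps_D - fps_X * (2 * fps_D - fps_H 1 + fps_H (- 1)))
        - fps_X ^ 2 * ((1 - fps_X) * ratio_fps - fps_X) * ?W1"
    unfolding H by (simp add: algebra_simps power2_eq_square del: comb_gf.simps)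
  also have "\<dots> = 0"
    using fps_D_rec one_minus_X_mult_ratio_fps by simp
  finally have "(1 - 2 * fps_X) * ((1 - fps_X) * fps_D - fps_X ^ 2 * ?W1) = 0" .
  moreover have "(1 - 2 * fps_X :: real fps) \<noteq> 0"
    by (metis fps_X_nth fps_one_nth fps_sub_nth fps_mult_left_const_nth numeral_fps_const diff_zero
        mult_zero_right one_neq_zero right_minus_eq zero_neq_one)
  ultimately show ?thesis by simp
qed

lemma fps_D_eq: "2 * fps_D = diag_gf 0 - inverse (1 - fps_X)"
proof -
  have "(1 - fps_X) * (2 * fps_D) = 2 * fps_X ^ 2 * comb_gf 0 1"
    using one_minus_X_mult_fps_D by (simp add: mult.left_commute)
  also have "\<dots> = (1 - fps_X) * diag_gf 0 - 1"
    using diag_gf_zero_eq by (simp add: algebra_simps numeral_eq_Suc)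
  also have "\<dots> = (1 - fps_X) * (diag_gf 0 - inverse (1 - fps_X))"
    by (simp add: right_diff_distrib inverse_mult_eq_1')
  finally show ?thesis
    using one_minus_X_nonzero by simp
qed

lemma leads_diff_eq_npaths:
  "2 * (real (bob_leads n) - real (alice_leads n)) = npaths (int n) (int n) - 1"
proof -
  have "(2 * fps_D) $ n = (diag_gf 0 - inverse (1 - fps_X)) $ n"
    by (simp only: fps_D_eq)
  then show ?thesis
    by (simp add: fps_D_def diag_gf_def fps_inverse_one_minus_fps_X numeral_fps_const)
qed

theorem mainTheorem13:
  fixes S :: "(nat \<times> nat) set" and c :: "nat \<times> nat \<Rightarrow> nat"
  assumes "S = {(6,5), (0,1), (1,1), (3,3)}"
    and "c = (\<lambda>s. if s = (3,3) then 2 else 1)"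
  shows "(\<forall>n. Delta n = (real (N_SC S c n n) - 1) / 2 ^ (n + 1))
         \<and> (\<forall>n\<ge>3. Delta n > 0)"
proof -
  have Delta: "Delta n = (npaths (int n) (int n) - 1) / 2 ^ (n + 1)" for n
  proof -
    have "Delta n = 2 * (real (bob_leads n) - real (alice_leads n)) / 2 ^ (n + 1)"
      by (simp add: Delta_eq_leads field_simps)
    then show ?thesis
      by (simp only: leads_diff_eq_npaths)
  qed
  have "real (N_SC S c n n) = npaths (int n) (int n)" for n
    by (simp add: assms npaths_def steps_def colours_def)
  moreover have "Delta n > 0" if "n \<ge> 3" for n
    using npaths_diag_ge_2[OF that] by (simp add: Delta)
  ultimately show ?thesis
    by (simp add: Delta)
qed

end
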